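(* Let $n>k\geq 1$, $r=n-k$, and for $i\in[m]$ let $1\leq h_i\leq n-k$ and $k\leq d_i\leq n-h_i$ be integers with $h_i\mid (d_i-k)$. Put $s_i=\frac{d_i-k+h_i}{h_i}$, where the pairs are indexed so that $s_1\leq s_2\leq\cdots\leq s_m$; let $s=\mathrm{lcm}(s_1,\ldots,s_{m-1})$ (with $s=1$ if $m=1$) and $\ell=s\cdot s_m^n$. Let $F$ be a finite field with $|F|\geq s_m n$ and let $\lambda_{i,j}$, $i\in[n]$, $j\in[0,s_m-1]$, be $s_m n$ distinct elements of $F$. Let $\mathcal{C}_2$ be the set of all $(\bm c_1,\ldots,\bm c_n)$ with $\bm c_i=(c_{i,0},\ldots,c_{i,\ell-1})\in F^\ell$ satisfying $$\sum_{i=1}^n \lambda_{i,a_i}^{t-1} c_{i,(a,b)}=0\quad\text{for all } a\in[0,s_m^n-1],\ b\in[0,s-1],\ t\in[r].$$ Then $\mathcal{C}_2$ is an $(n,k,\ell)$ MDS array code satisfying the $(h_i,d_i)$-optimal repair property for every $i\in[m]$ simultaneously.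
   Context: Notation: $[n]=\{1,\ldots,n\}$, $[i,j]=\{i,\ldots,j\}$. Each $\tau\in[0,\ell-1]$ is written uniquely as $\tau=b\cdot s_m^n+\sum_{i=1}^n a_i s_m^{i-1}$ with $b\in[0,s-1]$, $a_i\in[0,s_m-1]$; we write $a=(a_1,\ldots,a_n)=\sum_i a_i s_m^{i-1}$ and $\tau=(a,b)$, so $c_{i,(a,b)}=c_{i,\tau}$. An $(n,k,\ell)$ MDS array code over $F$ is an $F$-linear set of vectors $(\bm c_1,\ldots,\bm c_n)$, $\bm c_i\in F^\ell$ (node $i$ stores $\bm c_i$), of dimension $k\ell$, such that any $k$ coordinates $\bm c_i$ determine the codeword. For $1\leq h\leq n-k$, $k\leq d\leq n-h$, the $(h,d)$-optimal repair property means: for every $h$-subset $\mathcal{H}\subseteq[n]$ and every $d$-subset $\mathcal{R}\subseteq[n]\setminus\mathcal{H}$, each helper $j\in\mathcal{R}$ can send $\beta=\frac{h\ell}{d-k+h}$ symbols of $F$ computed from $\bm c_j$ such that from these $\frac{dh\ell}{d-k+h}$ symbols in total all $\bm c_i$, $i\in\mathcal{H}$, are determined, for every codeword (equality in the cut-set bound). *)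

theory Defs
  imports Main "HOL.Vector_Spaces" "HOL-Library.Function_Algebras"
begin

text \<open>A codeword is a function c :: nat => nat => 'a; c i tau is symbol tau of node i.
  Only i in {1..n}, tau < ell are meaningful; all other entries are required to be 0,
  so that codewords correspond bijectively to tuples (c_1,...,c_n) in (F^ell)^n.\<close>

definition codeword_space :: "nat \<Rightarrow> nat \<Rightarrow> (nat \<Rightarrow> nat \<Rightarrow> 'a::zero) set" where
  "codeword_space n ell = {c. \<forall>i tau. (i \<notin> {1..n} \<or> ell \<le> tau) \<longrightarrow> c i tau = 0}"

definition cw_scale :: "'a::field \<Rightarrow> (nat \<Rightarrow> nat \<Rightarrow> 'a) \<Rightarrow> (nat \<Rightarrow> nat \<Rightarrow> 'a)" where
  "cw_scale a c = (\<lambda>i tau. a * c i tau)"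

definition is_MDS_array_code ::
  "nat \<Rightarrow> nat \<Rightarrow> nat \<Rightarrow> (nat \<Rightarrow> nat \<Rightarrow> 'a::field) set \<Rightarrow> bool" where
  "is_MDS_array_code n k ell C \<longleftrightarrow>
     C \<subseteq> codeword_space n ell \<and>
     module.subspace cw_scale C \<and>
     vector_space.dim cw_scale C = k * ell \<and>
     (\<forall>K. K \<subseteq> {1..n} \<and> card K = k \<longrightarrow>
        (\<forall>c\<in>C. \<forall>c'\<in>C. (\<forall>i\<in>K. c i = c' i) \<longrightarrow> c = c'))"

text \<open>(h,d)-optimal repair property: for every h-subset H of [n] and d-subset R of
  [n]-H, every helper j in R sends beta = h*ell/(d-k+h) symbols of F computed from c_j
  (via an arbitrary function f j of c_j; only the outputs at indices < beta are sent),
  such that these symbols determine c_i for all i in H, for every codeword.\<close>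
definition optimal_repair ::
  "nat \<Rightarrow> nat \<Rightarrow> nat \<Rightarrow> nat \<Rightarrow> nat \<Rightarrow> (nat \<Rightarrow> nat \<Rightarrow> 'a::field) set \<Rightarrow> bool" where
  "optimal_repair n k ell h d C \<longleftrightarrow>
     (\<forall>H R. H \<subseteq> {1..n} \<and> card H = h \<and> R \<subseteq> {1..n} - H \<and> card R = d \<longrightarrow>
        (\<exists>f :: nat \<Rightarrow> (nat \<Rightarrow> 'a) \<Rightarrow> nat \<Rightarrow> 'a.
           \<forall>c\<in>C. \<forall>c'\<in>C.
             (\<forall>j\<in>R. \<forall>u < h * ell div (d - k + h). f j (c j) u = f j (c' j) u)
             \<longrightarrow> (\<forall>i\<in>H. c i = c' i)))"

definition digit :: "nat \<Rightarrow> nat \<Rightarrow> nat \<Rightarrow> nat" where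
  "digit sm a i = a div sm ^ (i - 1) mod sm"

text \<open>The code C_2: tau = (a,b) = b * sm^n + a.\<close>
definition code2 ::
  "nat \<Rightarrow> nat \<Rightarrow> nat \<Rightarrow> nat \<Rightarrow> (nat \<Rightarrow> nat \<Rightarrow> 'a::field) \<Rightarrow> (nat \<Rightarrow> nat \<Rightarrow> 'a) set" where
  "code2 n r sm s lam =
     {c \<in> codeword_space n (s * sm ^ n).
        \<forall>a < sm ^ n. \<forall>b < s. \<forall>t \<in> {1..r}.
          (\<Sum>i = 1..n. lam i (digit sm a i) ^ (t - 1) * c i (b * sm ^ n + a)) = 0}"

end

(*
  Every row tau = (a, b) of a codeword satisfies n - k Reed-Solomon-type parity checks whose
  evaluation point at node i is lambda_{i, a_i}. Hence any k nodes determine a row, as the other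
  n - k symbols solve a Vandermonde system; solving the same systems for unit data on nodes
  1..k gives a basis of k * ell codewords.

  To repair h nodes H from d helpers, let s_i = (d - k + h) / h, which divides s * s_m and is at
  most s_m. The rows split into ell / s_i groups of s_i rows on which the digits a_j of all nodes
  j outside H are constant, while every failed node runs through s_i distinct digits (the digits
  on H are fixed relative to a_{i0} for one i0 in H, and b * s_m + a_{i0} ranges over a block of
  s_i consecutive integers). Each helper sends its sum over every group. Summing the parity checks
  over a group leaves h * s_i unknown symbols of the failed nodes and one unknown sum for each of
  the n - h - d idle nodes, i.e. n - k unknowns with distinct evaluation points, and the
  Vandermonde argument recovers them.
*)
theory Submission
  imports Defs "HOL-Library.FuncSet"
begin

lemma eq_if_mod_eq_and_close:
  fixes p q m :: nat
  assumes "p mod m = q mod m" "p < q + m" "q < p + m"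
  shows "p = q"
proof -
  have "x = y" if "x mod m = y mod m" "x \<le> y" "y < x + m" for x y :: nat
  proof -
    have "m dvd y - x" using that(1,2) by (metis mod_eq_dvd_iff_nat)
    moreover have "y - x < m" using that(2,3) by linarith
    ultimately have "y - x = 0" by (metis dvd_imp_le neq0_conv not_le)
    thus ?thesis using that(2) by simp
  qed
  thus ?thesis using assms by (metis nat_le_linear)
qed

lemma less_add_if_div_eq:
  fixes p q m :: nat
  assumes "p div m = q div m" "0 < m"
  shows "p < q + m"
proof -
  have "p = q div m * m + p mod m" using assms(1) by (metis div_mult_mod_eq)
  moreover have "q div m * m \<le> q" by (rule div_times_less_eq_dividend)
  moreover have "p mod m < m" using assms(2) by simp
  ultimately show ?thesis by linarith
qed

lemma shifted_mod_eq_cancel: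
  fixes x y a b m :: nat
  assumes "x < m" "y < m" "a < m" "b < m" and eq: "(x + m - a) mod m = (y + m - b) mod m"
  shows "x = y \<longleftrightarrow> a = b"
proof -
  have "x + m - a = y + m - b \<Longrightarrow> x = y \<longleftrightarrow> a = b" using assms by arith
  moreover have "x + m - a = y + m - b" if "x = y \<or> a = b"
    by (rule eq_if_mod_eq_and_close[OF eq]) (use assms that in arith)+
  ultimately show ?thesis by blast
qed

lemma digit_less: "0 < sm \<Longrightarrow> digit sm a i < sm"
  by (simp add: digit_def)

lemma mod_power_eq_if_digits_eq:
  assumes "\<forall>i\<in>{1..j}. digit sm a i = digit sm b i"
  shows "a mod sm ^ j = b mod sm ^ j"
  using assms
proof (induction j)
  case (Suc j)
  have "digit sm a (Suc j) = digit sm b (Suc j)" using Suc.prems by simp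
  hence "a div sm ^ j mod sm = b div sm ^ j mod sm" by (simp add: digit_def)
  moreover have "x mod sm ^ Suc j = sm ^ j * (x div sm ^ j mod sm) + x mod sm ^ j" for x
    by (simp only: power_Suc2 mod_mult2_eq)
  ultimately show ?case using Suc by simp
qed simp

lemma vandermonde_weights_eq_0:
  fixes g :: "'b \<Rightarrow> 'a::field"
  assumes "finite I" "inj_on g I" "card I \<le> r"
    and "\<And>t. t < r \<Longrightarrow> (\<Sum>p\<in>I. w p * g p ^ t) = 0"
    and "p \<in> I"
  shows "w p = 0"
  using assms
proof (induction I arbitrary: r w p rule: finite_induct)
  case (insert x I)
  \<comment> \<open>Reweighting by g q - g x kills the weight at x and uses up one power.\<close>
  define w' where "w' q = w q * (g q - g x)" for q
  have "(\<Sum>q\<in>I. w' q * g q ^ t) = 0" if "t < r - 1" for t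
  proof -
    have "(\<Sum>q\<in>I. w' q * g q ^ t) = (\<Sum>q\<in>insert x I. w' q * g q ^ t)"
      using insert.hyps by (simp add: w'_def)
    also have "\<dots> = (\<Sum>q\<in>insert x I. w q * g q ^ Suc t) - g x * (\<Sum>q\<in>insert x I. w q * g q ^ t)"
      by (simp add: w'_def sum_distrib_left sum_subtractf[symmetric] algebra_simps)
    also have "\<dots> = 0" using insert.prems(3)[of "Suc t"] insert.prems(3)[of t] that by simp
    finally show ?thesis .
  qed
  hence "w' q = 0" if "q \<in> I" for q
    using insert.IH[of "r - 1" w' q] insert.prems insert.hyps that by (auto simp: inj_on_insert)
  moreover have "g q \<noteq> g x" if "q \<in> I" for q
    using insert.prems(1) insert.hyps that by (auto simp: inj_on_def)
  ultimately have w_I: "w q = 0" if "q \<in> I" for q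
    using that by (simp add: w'_def)
  have "(\<Sum>q\<in>insert x I. w q * g q ^ 0) = 0"
    using insert.prems(3)[of 0] insert.prems(2) insert.hyps by simp
  hence "w x = 0" using insert.hyps w_I by simp
  thus ?case using w_I insert.prems(4) by auto
qed simp

lemma vandermonde_solvable:
  fixes g :: "'b \<Rightarrow> 'a::{field,finite}"
  assumes "finite P" "inj_on g P" "card P = r"
  shows "\<exists>x. \<forall>t<r. (\<Sum>p\<in>P. x p * g p ^ t) = y t"
proof -
  define moments where "moments x = restrict (\<lambda>t. \<Sum>p\<in>P. x p * g p ^ t) {..<r}" for x
  define X where "X = PiE P (\<lambda>_. UNIV :: 'a set)"
  define Y where "Y = PiE {..<r} (\<lambda>_. UNIV :: 'a set)"
  have "inj_on moments X"
  proof
    fix x x' assume x: "x \<in> X" and x': "x' \<in> X" and eq: "moments x = moments x'"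
    have "x p - x' p = 0" if "p \<in> P" for p
    proof (rule vandermonde_weights_eq_0[OF assms(1,2), of r])
      fix t assume "t < r"
      thus "(\<Sum>p\<in>P. (x p - x' p) * g p ^ t) = 0"
        using fun_cong[OF eq, of t] by (simp add: moments_def left_diff_distrib sum_subtractf)
    qed (use assms(3) that in auto)
    thus "x = x'" using x x' unfolding X_def by (metis PiE_ext eq_iff_diff_eq_0)
  qed
  moreover have "moments ` X \<subseteq> Y"
    by (simp add: moments_def Y_def image_subset_iff)
  moreover have "card X = card Y"
    using assms by (simp add: X_def Y_def card_PiE)
  ultimately have "moments ` X = Y"
    by (metis card_image card_subset_eq finite_PiE finite_lessThan Y_def finite)
  moreover have "restrict y {..<r} \<in> Y" by (simp add: Y_def)
  ultimately obtain x where "moments x = restrict y {..<r}" by auto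
  hence "\<forall>t<r. (\<Sum>p\<in>P. x p * g p ^ t) = y t"
    by (auto simp: moments_def fun_eq_iff split: if_splits)
  thus ?thesis by blast
qed

lemma (in vector_space) dim_eq_card_if_biorthogonal:
  fixes v :: "'c \<Rightarrow> 'b" and coord :: "'c \<Rightarrow> 'b \<Rightarrow> 'a"
  assumes "subspace V" "finite P" "v ` P \<subseteq> V"
    and add: "\<And>p x y. coord p (x + y) = coord p x + coord p y"
    and scale: "\<And>p c x. coord p (c *s x) = c * coord p x"
    and biorth: "\<And>p q. p \<in> P \<Longrightarrow> q \<in> P \<Longrightarrow> coord p (v q) = (if p = q then 1 else 0)"
    and faithful: "\<And>x. x \<in> V \<Longrightarrow> \<forall>p\<in>P. coord p x = 0 \<Longrightarrow> x = 0"
  shows "dim V = card P"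
proof -
  have "coord p 0 = 0" for p
    using scale[of p 0 0] by simp
  hence coord_sum: "coord p (\<Sum>q\<in>Q. u q *s v q) = (\<Sum>q\<in>Q. u q * coord p (v q))" for p u Q
    by (induction Q rule: infinite_finite_induct) (simp_all add: add scale)
  have coord_dual: "coord p (\<Sum>q\<in>P. u q *s v q) = u p" if "p \<in> P" for p u
    using that assms(2) by (simp add: coord_sum biorth if_distrib cong: if_cong)
  have inj: "inj_on v P"
    by (rule inj_onI) (metis biorth one_neq_zero)
  have "independent (v ` P)"
  proof (rule independent_if_scalars_zero)
    fix f x assume sum0: "(\<Sum>x\<in>v ` P. f x *s x) = 0" and "x \<in> v ` P"
    then obtain p where p: "p \<in> P" "x = v p" by blast
    have "0 = coord p (\<Sum>q\<in>P. f (v q) *s v q)"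
      using sum0 coord_sum[of p "\<lambda>_. 0" "{}"] by (simp add: sum.reindex[OF inj])
    thus "f x = 0" using coord_dual[OF p(1)] p(2) by simp
  qed (use assms(2) in simp)
  moreover have "V \<subseteq> span (v ` P)"
  proof
    fix x assume x: "x \<in> V"
    define y where "y = (\<Sum>q\<in>P. coord q x *s v q)"
    have y_span: "y \<in> span (v ` P)"
      unfolding y_def by (intro span_sum span_scale span_base) auto
    hence "x - y \<in> V"
      using assms(1,3) x by (meson span_minimal subsetD subspace_diff)
    moreover have "coord p (x - y) = 0" if "p \<in> P" for p
      using add[of p "x - y" y] coord_dual[OF that] by (simp add: y_def)
    ultimately have "x - y = 0" using faithful by blast
    thus "x \<in> span (v ` P)" using y_span by simp
  qed
  ultimately show ?thesis
    using dim_unique[OF assms(3)] card_image[OF inj] by simp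
qed

definition row_digit :: "nat \<Rightarrow> nat \<Rightarrow> nat \<Rightarrow> nat \<Rightarrow> nat" where
  "row_digit sm n \<tau> j = digit sm (\<tau> mod sm ^ n) j"

lemma row_digit_less: "0 < sm \<Longrightarrow> row_digit sm n \<tau> j < sm"
  by (simp add: row_digit_def digit_less)

lemma eq_if_row_digits_eq:
  assumes "\<tau>1 div sm ^ n = \<tau>2 div sm ^ n" "\<forall>j\<in>{1..n}. row_digit sm n \<tau>1 j = row_digit sm n \<tau>2 j"
  shows "\<tau>1 = \<tau>2"
proof -
  have "\<tau>1 mod sm ^ n mod sm ^ n = \<tau>2 mod sm ^ n mod sm ^ n"
    using assms(2) unfolding row_digit_def by (rule mod_power_eq_if_digits_eq)
  thus ?thesis using assms(1) by (metis div_mult_mod_eq mod_mod_trivial)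
qed

locale repair_rows =
  fixes sm n s si :: nat and H :: "nat set" and i0 :: nat
  assumes si_pos: "0 < si" and si_le: "si \<le> sm" and si_dvd: "si dvd s * sm"
    and H_sub: "H \<subseteq> {1..n}" and i0_in: "i0 \<in> H"
begin

abbreviation dig :: "nat \<Rightarrow> nat \<Rightarrow> nat" where
  "dig \<equiv> row_digit sm n"

lemma sm_pos: "0 < sm"
  using si_pos si_le by simp

definition pos :: "nat \<Rightarrow> nat" where
  "pos \<tau> = \<tau> div sm ^ n * sm + dig \<tau> i0"

definition rel :: "nat \<Rightarrow> nat \<Rightarrow> nat" where
  "rel \<tau> j = (if j \<in> H then (dig \<tau> j + sm - dig \<tau> i0) mod sm else dig \<tau> j)"

text \<open>Rows with equal key form a repair group. On the failed nodes only the digits relative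
  to the digit at i0 are recorded, and pos = b * sm + a_i0 only up to blocks of si consecutive
  values; so within a group the digit of each failed node takes si distinct values, while the
  digits of all other nodes are constant.\<close>
definition key :: "nat \<Rightarrow> (nat \<Rightarrow> nat) \<times> nat" where
  "key \<tau> = (restrict (rel \<tau>) ({1..n} - {i0}), pos \<tau> div si)"

lemma pos_div: "pos \<tau> div sm = \<tau> div sm ^ n" and pos_mod: "pos \<tau> mod sm = dig \<tau> i0"
  using row_digit_less[OF sm_pos, of n \<tau> i0] sm_pos by (simp_all add: pos_def)

lemma rel_eq_if_key_eq:
  "key \<tau>1 = key \<tau>2 \<Longrightarrow> j \<in> {1..n} - {i0} \<Longrightarrow> rel \<tau>1 j = rel \<tau>2 j"
  unfolding key_def by (metis fst_conv restrict_apply')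

lemma digit_eq_if_key_eq:
  assumes "key \<tau>1 = key \<tau>2" "j \<in> {1..n} - H"
  shows "dig \<tau>1 j = dig \<tau>2 j"
proof -
  have "j \<noteq> i0" using assms(2) i0_in by blast
  thus ?thesis using rel_eq_if_key_eq[OF assms(1), of j] assms(2) by (simp add: rel_def)
qed

lemma eq_if_key_eq_pos_eq:
  assumes key: "key \<tau>1 = key \<tau>2" and pos: "pos \<tau>1 = pos \<tau>2"
  shows "\<tau>1 = \<tau>2"
proof (rule eq_if_row_digits_eq)
  show "\<tau>1 div sm ^ n = \<tau>2 div sm ^ n" using pos by (metis pos_div)
  have d0: "dig \<tau>1 i0 = dig \<tau>2 i0" using pos by (metis pos_mod)
  show "\<forall>j\<in>{1..n}. dig \<tau>1 j = dig \<tau>2 j"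
  proof
    fix j assume j: "j \<in> {1..n}"
    show "dig \<tau>1 j = dig \<tau>2 j"
    proof (cases "j = i0 \<or> j \<notin> H")
      case True
      thus ?thesis using d0 digit_eq_if_key_eq[OF key] j by blast
    next
      case False
      hence "(dig \<tau>1 j + sm - dig \<tau>1 i0) mod sm = (dig \<tau>2 j + sm - dig \<tau>2 i0) mod sm"
        using rel_eq_if_key_eq[OF key, of j] j by (simp add: rel_def)
      thus ?thesis using shifted_mod_eq_cancel[OF row_digit_less[OF sm_pos] row_digit_less[OF sm_pos]
          row_digit_less[OF sm_pos] row_digit_less[OF sm_pos]] d0 by blast
    qed
  qed
qed

lemma pos_eq_if_key_eq_pos_mod_eq:
  assumes "key \<tau>1 = key \<tau>2" "pos \<tau>1 mod sm = pos \<tau>2 mod sm"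
  shows "pos \<tau>1 = pos \<tau>2"
proof (rule eq_if_mod_eq_and_close[OF assms(2)])
  have "pos \<tau>1 div si = pos \<tau>2 div si" using assms(1) by (simp add: key_def)
  hence "pos \<tau>1 < pos \<tau>2 + si" "pos \<tau>2 < pos \<tau>1 + si"
    using less_add_if_div_eq si_pos by auto
  thus "pos \<tau>1 < pos \<tau>2 + sm" "pos \<tau>2 < pos \<tau>1 + sm" using si_le by simp_all
qed

lemma eq_if_key_eq_digit_eq:
  assumes key: "key \<tau>1 = key \<tau>2" and "i \<in> H" and dig: "dig \<tau>1 i = dig \<tau>2 i"
  shows "\<tau>1 = \<tau>2"
proof -
  have "dig \<tau>1 i0 = dig \<tau>2 i0"
  proof (cases "i = i0")
    case False
    hence "(dig \<tau>1 i + sm - dig \<tau>1 i0) mod sm = (dig \<tau>2 i + sm - dig \<tau>2 i0) mod sm"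
      using rel_eq_if_key_eq[OF key, of i] assms(2) H_sub by (auto simp: rel_def)
    thus ?thesis using shifted_mod_eq_cancel[OF row_digit_less[OF sm_pos] row_digit_less[OF sm_pos]
        row_digit_less[OF sm_pos] row_digit_less[OF sm_pos]] dig by blast
  qed (use dig in simp)
  hence "pos \<tau>1 = pos \<tau>2" using pos_eq_if_key_eq_pos_mod_eq[OF key] by (simp add: pos_mod)
  thus ?thesis using eq_if_key_eq_pos_eq[OF key] by simp
qed

lemma card_key_fiber_le: "card {\<tau>. \<tau> < s * sm ^ n \<and> key \<tau> = \<kappa>} \<le> si"
proof -
  have "inj_on (\<lambda>\<tau>. pos \<tau> mod si) {\<tau>. \<tau> < s * sm ^ n \<and> key \<tau> = \<kappa>}"
  proof (rule inj_onI)
    fix \<tau>1 \<tau>2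
    assume "\<tau>1 \<in> {\<tau>. \<tau> < s * sm ^ n \<and> key \<tau> = \<kappa>}" "\<tau>2 \<in> {\<tau>. \<tau> < s * sm ^ n \<and> key \<tau> = \<kappa>}"
      and pos_mod_eq: "pos \<tau>1 mod si = pos \<tau>2 mod si"
    hence key: "key \<tau>1 = key \<tau>2" by simp
    hence "pos \<tau>1 div si = pos \<tau>2 div si" by (simp add: key_def)
    hence "pos \<tau>1 = pos \<tau>2" using pos_mod_eq by (metis div_mult_mod_eq)
    thus "\<tau>1 = \<tau>2" using eq_if_key_eq_pos_eq[OF key] by simp
  qed
  hence "card {\<tau>. \<tau> < s * sm ^ n \<and> key \<tau> = \<kappa>} \<le> card {..<si}"
    by (rule card_inj_on_le) (use si_pos in auto)
  thus ?thesis by simp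
qed

definition keys :: "((nat \<Rightarrow> nat) \<times> nat) set" where
  "keys = PiE ({1..n} - {i0}) (\<lambda>_. {..<sm}) \<times> {..<s * sm div si}"

lemma key_in_keys:
  assumes "\<tau> < s * sm ^ n"
  shows "key \<tau> \<in> keys"
proof -
  have "rel \<tau> j < sm" for j
    using row_digit_less[OF sm_pos] sm_pos by (simp add: rel_def)
  moreover have "pos \<tau> < s * sm"
  proof -
    have "\<tau> div sm ^ n < s" using assms by (simp add: less_mult_imp_div_less)
    hence "\<tau> div sm ^ n * sm + sm \<le> s * sm" by (metis Suc_leI mult_Suc mult_le_mono1 add.commute)
    thus ?thesis using row_digit_less[OF sm_pos, of n \<tau> i0] by (simp add: pos_def)
  qed
  hence "pos \<tau> div si < s * sm div si"
    using si_dvd si_pos by (metis dvd_div_mult_self less_mult_imp_div_less)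
  ultimately show ?thesis by (simp add: key_def keys_def)
qed

lemma card_keys: "card keys = s * sm ^ n div si"
proof -
  obtain w where w: "s * sm = si * w" using si_dvd by blast
  have "n \<noteq> 0" using H_sub i0_in by auto
  hence "s * sm ^ n = si * (w * sm ^ (n - 1))"
    by (metis w mult.assoc power_eq_if)
  moreover have "card ({1..n} - {i0}) = n - 1" using H_sub i0_in by auto
  ultimately show ?thesis
    using w si_pos by (simp add: keys_def card_cartesian_product card_PiE)
qed

lemma exists_repair_grouping:
  obtains grp :: "nat \<Rightarrow> nat" where
    "\<And>\<tau>. \<tau> < s * sm ^ n \<Longrightarrow> grp \<tau> < s * sm ^ n div si"
    and "\<And>\<tau>0. \<tau>0 < s * sm ^ n \<Longrightarrow> card {\<tau>. \<tau> < s * sm ^ n \<and> grp \<tau> = grp \<tau>0} \<le> si"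
    and "\<And>\<tau>0 \<tau> j. \<tau>0 < s * sm ^ n \<Longrightarrow> \<tau> < s * sm ^ n \<Longrightarrow> grp \<tau> = grp \<tau>0 \<Longrightarrow>
           j \<in> {1..n} - H \<Longrightarrow> dig \<tau> j = dig \<tau>0 j"
    and "\<And>\<tau>0 i. \<tau>0 < s * sm ^ n \<Longrightarrow> i \<in> H \<Longrightarrow>
           inj_on (\<lambda>\<tau>. dig \<tau> i) {\<tau>. \<tau> < s * sm ^ n \<and> grp \<tau> = grp \<tau>0}"
proof -
  obtain enc where enc: "bij_betw enc keys {0..<card keys}"
    using ex_bij_betw_finite_nat[of keys] by (auto simp: keys_def finite_PiE)
  have fiber: "{\<tau>. \<tau> < s * sm ^ n \<and> enc (key \<tau>) = enc (key \<tau>0)} = {\<tau>. \<tau> < s * sm ^ n \<and> key \<tau> = key \<tau>0}"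
    if "\<tau>0 < s * sm ^ n" for \<tau>0
    using that key_in_keys bij_betw_imp_inj_on[OF enc] by (auto dest: inj_onD)
  show ?thesis
  proof (rule that[of "\<lambda>\<tau>. enc (key \<tau>)"])
    show "enc (key \<tau>) < s * sm ^ n div si" if "\<tau> < s * sm ^ n" for \<tau>
      using bij_betwE[OF enc] key_in_keys[OF that] card_keys by auto
    show "card {\<tau>. \<tau> < s * sm ^ n \<and> enc (key \<tau>) = enc (key \<tau>0)} \<le> si"
      if "\<tau>0 < s * sm ^ n" for \<tau>0
      unfolding fiber[OF that] by (rule card_key_fiber_le)
    show "dig \<tau> j = dig \<tau>0 j"
      if "\<tau>0 < s * sm ^ n" "\<tau> < s * sm ^ n" "enc (key \<tau>) = enc (key \<tau>0)" "j \<in> {1..n} - H"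
      for \<tau>0 \<tau> j
      using fiber[OF that(1)] that(2-4) digit_eq_if_key_eq by blast
    show "inj_on (\<lambda>\<tau>. dig \<tau> i) {\<tau>. \<tau> < s * sm ^ n \<and> enc (key \<tau>) = enc (key \<tau>0)}"
      if "\<tau>0 < s * sm ^ n" "i \<in> H" for \<tau>0 i
      unfolding fiber[OF that(1)] using eq_if_key_eq_digit_eq[OF _ that(2)] by (auto intro: inj_onI)
  qed
qed

end

interpretation cw: vector_space cw_scale
  by unfold_locales (auto simp: cw_scale_def fun_eq_iff algebra_simps)

locale code2_setting =
  fixes n k sm s :: nat and lam :: "nat \<Rightarrow> nat \<Rightarrow> 'a::{field,finite}"
  assumes sm_pos: "0 < sm" and k_less_n: "k < n"
    and lam_inj: "inj_on (\<lambda>(i, j). lam i j) ({1..n} \<times> {0..<sm})"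
begin

abbreviation ell :: nat where
  "ell \<equiv> s * sm ^ n"

abbreviation code :: "(nat \<Rightarrow> nat \<Rightarrow> 'a) set" where
  "code \<equiv> code2 n (n - k) sm s lam"

definition node_point :: "nat \<Rightarrow> nat \<Rightarrow> 'a" where
  "node_point j \<tau> = lam j (row_digit sm n \<tau> j)"

lemma node_point_eq_iff:
  assumes "i \<in> {1..n}" "j \<in> {1..n}"
  shows "node_point i \<tau> = node_point j \<tau>' \<longleftrightarrow> i = j \<and> row_digit sm n \<tau> i = row_digit sm n \<tau>' j"
  using inj_onD[OF lam_inj, of "(i, row_digit sm n \<tau> i)" "(j, row_digit sm n \<tau>' j)"]
    assms row_digit_less[OF sm_pos] by (auto simp: node_point_def)

lemma inj_on_node_point: "A \<subseteq> {1..n} \<Longrightarrow> inj_on (\<lambda>j. node_point j \<tau>) A"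
  by (auto intro!: inj_onI simp: node_point_eq_iff subset_iff)

lemma code2_iff:
  "c \<in> code \<longleftrightarrow> c \<in> codeword_space n ell \<and>
     (\<forall>\<tau><ell. \<forall>t<n - k. (\<Sum>j=1..n. node_point j \<tau> ^ t * c j \<tau>) = 0)"
proof -
  have "(\<forall>a < sm ^ n. \<forall>b < s. \<forall>t \<in> {1..n - k}.
          (\<Sum>j=1..n. lam j (digit sm a j) ^ (t - 1) * c j (b * sm ^ n + a)) = 0) \<longleftrightarrow>
        (\<forall>\<tau><ell. \<forall>t<n - k. (\<Sum>j=1..n. node_point j \<tau> ^ t * c j \<tau>) = 0)"
  proof (intro iffI allI impI ballI)
    fix \<tau> t assume all_ab: "\<forall>a < sm ^ n. \<forall>b < s. \<forall>t \<in> {1..n - k}.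
        (\<Sum>j=1..n. lam j (digit sm a j) ^ (t - 1) * c j (b * sm ^ n + a)) = 0"
      and "\<tau> < ell" "t < n - k"
    moreover have "\<tau> div sm ^ n < s" using \<open>\<tau> < ell\<close> by (simp add: less_mult_imp_div_less)
    ultimately show "(\<Sum>j=1..n. node_point j \<tau> ^ t * c j \<tau>) = 0"
      using all_ab[rule_format, of "\<tau> mod sm ^ n" "\<tau> div sm ^ n" "Suc t"] sm_pos
      by (simp add: node_point_def row_digit_def div_mult_mod_eq)
  next
    fix a b t assume all_\<tau>: "\<forall>\<tau><ell. \<forall>t<n - k. (\<Sum>j=1..n. node_point j \<tau> ^ t * c j \<tau>) = 0"
      and "a < sm ^ n" "b < s" "t \<in> {1..n - k}"
    moreover have "b * sm ^ n + a < ell"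
      using \<open>a < sm ^ n\<close> \<open>b < s\<close> mult_le_mono1[of "Suc b" s "sm ^ n"] by simp
    moreover have "t - 1 < n - k" using \<open>t \<in> {1..n - k}\<close> by auto
    ultimately show "(\<Sum>j=1..n. lam j (digit sm a j) ^ (t - 1) * c j (b * sm ^ n + a)) = 0"
      using all_\<tau>[rule_format, of "b * sm ^ n + a" "t - 1"]
      by (simp add: node_point_def row_digit_def)
  qed
  thus ?thesis unfolding code2_def by blast
qed

lemma code2_zero: "c \<in> code \<Longrightarrow> i \<notin> {1..n} \<or> ell \<le> \<tau> \<Longrightarrow> c i \<tau> = 0"
  by (simp add: code2_iff codeword_space_def)

lemma code2_parity:
  "c \<in> code \<Longrightarrow> \<tau> < ell \<Longrightarrow> t < n - k \<Longrightarrow> (\<Sum>j=1..n. node_point j \<tau> ^ t * c j \<tau>) = 0"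
  by (simp add: code2_iff)

lemma code2_subspace: "cw.subspace code"
proof -
  have "0 \<in> code" by (simp add: code2_iff codeword_space_def)
  moreover have "x + y \<in> code" if "x \<in> code" "y \<in> code" for x y
    using that by (simp add: code2_iff codeword_space_def distrib_left sum.distrib)
  moreover have "cw_scale a x \<in> code" if "x \<in> code" for a x
  proof -
    have "(\<Sum>j=1..n. node_point j \<tau> ^ t * (a * x j \<tau>)) = a * (\<Sum>j=1..n. node_point j \<tau> ^ t * x j \<tau>)"
      for \<tau> t by (simp add: sum_distrib_left mult.left_commute)
    thus ?thesis using that by (simp add: code2_iff codeword_space_def cw_scale_def)
  qed
  ultimately show ?thesis unfolding cw.subspace_def by blast
qed

lemma code2_eq_0_if_zero_on:
  assumes c: "c \<in> code" and K: "K \<subseteq> {1..n}" "card K = k" and zero: "\<forall>i\<in>K. c i = 0"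
  shows "c = 0"
proof (intro ext)
  fix i \<tau>
  show "c i \<tau> = 0 i \<tau>"
  proof (cases "i \<in> {1..n} - K \<and> \<tau> < ell")
    case True
    show ?thesis
    proof (simp, rule vandermonde_weights_eq_0[where w = "\<lambda>j. c j \<tau>"])
      show "inj_on (\<lambda>j. node_point j \<tau>) ({1..n} - K)" by (rule inj_on_node_point) auto
      show "card ({1..n} - K) \<le> n - k" using K by (simp add: card_Diff_subset finite_subset)
      fix t assume "t < n - k"
      have "(\<Sum>j\<in>{1..n} - K. c j \<tau> * node_point j \<tau> ^ t) = (\<Sum>j=1..n. node_point j \<tau> ^ t * c j \<tau>)"
        by (rule sum.mono_neutral_cong_left) (use zero in \<open>auto simp: mult.commute\<close>)
      also have "\<dots> = 0" using code2_parity[OF c] True \<open>t < n - k\<close> by simp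
      finally show "(\<Sum>j\<in>{1..n} - K. c j \<tau> * node_point j \<tau> ^ t) = 0" .
    qed (use True in auto)
  next
    case False
    thus ?thesis using zero code2_zero[OF c] by auto
  qed
qed

lemma code2_eq_if_agree_on:
  assumes "c \<in> code" "c' \<in> code" "K \<subseteq> {1..n}" "card K = k" "\<forall>i\<in>K. c i = c' i"
  shows "c = c'"
  using code2_eq_0_if_zero_on[of "c - c'" K] cw.subspace_diff[OF code2_subspace] assms by simp

lemma exists_unit_codeword:
  assumes "i0 \<in> {1..k}" "\<tau>0 < ell"
  shows "\<exists>c\<in>code. \<forall>i\<in>{1..k}. \<forall>\<tau>. c i \<tau> = (if i = i0 \<and> \<tau> = \<tau>0 then 1 else 0)"
proof -
  define g where "g j = node_point j \<tau>0" for j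
  have "inj_on g {k<..n}" unfolding g_def by (rule inj_on_node_point) auto
  then obtain y where y: "\<And>t. t < n - k \<Longrightarrow> (\<Sum>j\<in>{k<..n}. y j * g j ^ t) = - (g i0 ^ t)"
    using vandermonde_solvable[of "{k<..n}" g "n - k" "\<lambda>t. - (g i0 ^ t)"] by auto
  define u where "u i = (if i = i0 then 1 else if k < i \<and> i \<le> n then y i else 0)" for i
  define c where "c i \<tau> = (if \<tau> = \<tau>0 then u i else 0)" for i \<tau>
  have parity: "(\<Sum>j=1..n. g j ^ t * c j \<tau>0) = 0" if "t < n - k" for t
  proof -
    have "{1..n} = {1..k} \<union> {k<..n}" using k_less_n by auto
    hence "(\<Sum>j=1..n. g j ^ t * c j \<tau>0) = (\<Sum>j=1..k. g j ^ t * c j \<tau>0) + (\<Sum>j\<in>{k<..n}. g j ^ t * c j \<tau>0)"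
      by (simp add: sum.union_disjoint ivl_disj_int_two(8))
    also have "(\<Sum>j=1..k. g j ^ t * c j \<tau>0) = (\<Sum>j=1..k. if j = i0 then g i0 ^ t else 0)"
      by (rule sum.cong) (auto simp: c_def u_def)
    also have "\<dots> = g i0 ^ t" using assms(1) by simp
    also have "(\<Sum>j\<in>{k<..n}. g j ^ t * c j \<tau>0) = - (g i0 ^ t)"
      using y[OF that] assms(1) by (simp add: c_def u_def mult.commute)
    finally show ?thesis by simp
  qed
  have "c \<in> code"
    unfolding code2_iff codeword_space_def
  proof (intro conjI allI impI CollectI)
    fix i \<tau> assume "i \<notin> {1..n} \<or> ell \<le> \<tau>"
    thus "c i \<tau> = 0" using assms k_less_n by (auto simp: c_def u_def)
  next
    fix \<tau> t assume "\<tau> < ell" "t < n - k"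
    show "(\<Sum>j=1..n. node_point j \<tau> ^ t * c j \<tau>) = 0"
      using parity[OF \<open>t < n - k\<close>] by (cases "\<tau> = \<tau>0") (simp_all add: c_def g_def)
  qed
  moreover have "\<forall>i\<in>{1..k}. \<forall>\<tau>. c i \<tau> = (if i = i0 \<and> \<tau> = \<tau>0 then 1 else 0)"
    by (auto simp: c_def u_def)
  ultimately show ?thesis by blast
qed

lemma code2_dim: "cw.dim code = k * ell"
proof -
  let ?P = "{1..k} \<times> {..<ell}"
  have "\<forall>p\<in>?P. \<exists>c. c \<in> code \<and> (\<forall>i\<in>{1..k}. \<forall>\<tau>. c i \<tau> = (if (i, \<tau>) = p then 1 else 0))"
  proof
    fix p assume "p \<in> ?P"
    then obtain i0 \<tau>0 where "p = (i0, \<tau>0)" "i0 \<in> {1..k}" "\<tau>0 < ell" by auto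
    thus "\<exists>c. c \<in> code \<and> (\<forall>i\<in>{1..k}. \<forall>\<tau>. c i \<tau> = (if (i, \<tau>) = p then 1 else 0))"
      using exists_unit_codeword[of i0 \<tau>0] by auto
  qed
  then obtain v where v: "\<forall>p\<in>?P. v p \<in> code \<and>
      (\<forall>i\<in>{1..k}. \<forall>\<tau>. v p i \<tau> = (if (i, \<tau>) = p then 1 else 0))"
    by (rule bchoice[THEN exE])
  have "cw.dim code = card ?P"
  proof (rule cw.dim_eq_card_if_biorthogonal[where v = v and coord = "\<lambda>p c. c (fst p) (snd p)"])
    show "v ` ?P \<subseteq> code" using v by blast
    show "v q (fst p) (snd p) = (if p = q then 1 else 0)" if "p \<in> ?P" "q \<in> ?P" for p q
    proof -
      have "fst p \<in> {1..k}" using that(1) by (simp add: mem_Times_iff)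
      hence "v q (fst p) (snd p) = (if (fst p, snd p) = q then 1 else 0)" using v that(2) by blast
      thus ?thesis by simp
    qed
    show "c = 0" if c: "c \<in> code" and zero: "\<forall>p\<in>?P. c (fst p) (snd p) = 0" for c
    proof (rule code2_eq_0_if_zero_on[OF c, of "{1..k}"])
      have "c i \<tau> = 0" if "i \<in> {1..k}" for i \<tau>
        using zero[rule_format, of "(i, \<tau>)"] code2_zero[OF c, of i \<tau>] that by (cases "\<tau> < ell") auto
      thus "\<forall>i\<in>{1..k}. c i = 0" by auto
    qed (use k_less_n in auto)
  qed (simp_all add: code2_subspace cw_scale_def)
  thus ?thesis by (simp add: card_cartesian_product)
qed

lemma code2_is_MDS: "is_MDS_array_code n k ell code"
  unfolding is_MDS_array_code_def
proof (intro conjI allI impI ballI)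
  show "code \<subseteq> codeword_space n ell" by (auto simp: code2_iff)
  show "cw.subspace code" by (rule code2_subspace)
  show "cw.dim code = k * ell" by (rule code2_dim)
  show "c = c'" if "K \<subseteq> {1..n} \<and> card K = k" "c \<in> code" "c' \<in> code" "\<forall>i\<in>K. c i = c' i" for K c c'
    using code2_eq_if_agree_on that by blast
qed

lemma group_parity_sum:
  assumes e: "e \<in> code" and H: "H \<subseteq> {1..n}" and R: "R \<subseteq> {1..n} - H" and G: "G \<subseteq> {..<ell}"
    and const: "\<And>\<tau> j. \<tau> \<in> G \<Longrightarrow> j \<in> {1..n} - H \<Longrightarrow> row_digit sm n \<tau> j = row_digit sm n \<tau>0 j"
    and sent: "\<And>j. j \<in> R \<Longrightarrow> (\<Sum>\<tau>\<in>G. e j \<tau>) = 0"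
    and "t < n - k"
  shows "(\<Sum>(j, \<tau>)\<in>H \<times> G. e j \<tau> * node_point j \<tau> ^ t) +
         (\<Sum>j\<in>{1..n} - H - R. (\<Sum>\<tau>\<in>G. e j \<tau>) * node_point j \<tau>0 ^ t) = 0"
proof -
  have "(\<Sum>j\<in>{1..n} - H - R. (\<Sum>\<tau>\<in>G. e j \<tau>) * node_point j \<tau>0 ^ t)
      = (\<Sum>j\<in>{1..n} - H. (\<Sum>\<tau>\<in>G. e j \<tau>) * node_point j \<tau>0 ^ t)"
    by (rule sum.mono_neutral_left) (use R sent in auto)
  also have "\<dots> = (\<Sum>j\<in>{1..n} - H. \<Sum>\<tau>\<in>G. node_point j \<tau> ^ t * e j \<tau>)"
    using const by (simp add: node_point_def sum_distrib_right mult.commute)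
  finally have "(\<Sum>(j, \<tau>)\<in>H \<times> G. e j \<tau> * node_point j \<tau> ^ t) +
         (\<Sum>j\<in>{1..n} - H - R. (\<Sum>\<tau>\<in>G. e j \<tau>) * node_point j \<tau>0 ^ t)
      = (\<Sum>j\<in>H. \<Sum>\<tau>\<in>G. node_point j \<tau> ^ t * e j \<tau>) + (\<Sum>j\<in>{1..n} - H. \<Sum>\<tau>\<in>G. node_point j \<tau> ^ t * e j \<tau>)"
    by (simp add: sum.cartesian_product mult.commute)
  also have "\<dots> = (\<Sum>j=1..n. \<Sum>\<tau>\<in>G. node_point j \<tau> ^ t * e j \<tau>)"
    using sum.subset_diff[OF H finite_atLeastAtMost, of "\<lambda>j. \<Sum>\<tau>\<in>G. node_point j \<tau> ^ t * e j \<tau>"]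
    by (simp add: add.commute)
  also have "\<dots> = (\<Sum>\<tau>\<in>G. \<Sum>j=1..n. node_point j \<tau> ^ t * e j \<tau>)"
    by (rule sum.swap)
  also have "\<dots> = 0"
    using code2_parity[OF e] G \<open>t < n - k\<close> by (auto intro: sum.neutral)
  finally show ?thesis .
qed

lemma inj_on_node_point_group:
  assumes H: "H \<subseteq> {1..n}" and J: "J \<subseteq> {1..n} - H"
    and inj: "\<And>i. i \<in> H \<Longrightarrow> inj_on (\<lambda>\<tau>. row_digit sm n \<tau> i) G"
  shows "inj_on (\<lambda>(j, \<tau>). node_point j \<tau>) (H \<times> G \<union> J \<times> {\<tau>0})"
proof (rule inj_onI, clarify)
  fix j \<tau> j' \<tau>' assume p: "(j, \<tau>) \<in> H \<times> G \<union> J \<times> {\<tau>0}" and q: "(j', \<tau>') \<in> H \<times> G \<union> J \<times> {\<tau>0}"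
    and "node_point j \<tau> = node_point j' \<tau>'"
  moreover have "j \<in> {1..n}" "j' \<in> {1..n}" using p q H J by auto
  ultimately have "j = j'" and digit_eq: "row_digit sm n \<tau> j = row_digit sm n \<tau>' j"
    by (auto simp: node_point_eq_iff)
  moreover have "\<tau> = \<tau>'"
  proof (cases "j \<in> H")
    case True
    thus ?thesis using p q \<open>j = j'\<close> J inj_onD[OF inj[OF True] digit_eq] by auto
  qed (use p q \<open>j = j'\<close> in auto)
  ultimately show "j = j' \<and> \<tau> = \<tau>'" by simp
qed

text \<open>Summing the parity checks of a row group, the helpers contribute nothing and each idle
  node only through its sum over the group; what remains is a Vandermonde system in at most
  n - k unknowns with distinct evaluation points.\<close>
lemma repair_group:
  assumes e: "e \<in> code" and H: "H \<subseteq> {1..n}" and R: "R \<subseteq> {1..n} - H"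
    and budget: "card H * si + card ({1..n} - H - R) \<le> n - k"
    and G: "G \<subseteq> {..<ell}" "\<tau>0 \<in> G" "card G \<le> si"
    and const: "\<And>\<tau> j. \<tau> \<in> G \<Longrightarrow> j \<in> {1..n} - H \<Longrightarrow> row_digit sm n \<tau> j = row_digit sm n \<tau>0 j"
    and inj: "\<And>i. i \<in> H \<Longrightarrow> inj_on (\<lambda>\<tau>. row_digit sm n \<tau> i) G"
    and sent: "\<And>j. j \<in> R \<Longrightarrow> (\<Sum>\<tau>\<in>G. e j \<tau>) = 0"
    and "i \<in> H" "\<tau> \<in> G"
  shows "e i \<tau> = 0"
proof -
  define J where "J = {1..n} - H - R"
  define w where "w = (\<lambda>(j, \<tau>). if j \<in> H then e j \<tau> else (\<Sum>\<tau>'\<in>G. e j \<tau>'))"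
  have fin: "finite H" "finite G" "finite J"
    using finite_subset[OF H] finite_subset[OF G(1)] by (auto simp: J_def)
  have HJ: "H \<inter> J = {}" "J \<subseteq> {1..n} - H" by (auto simp: J_def)
  have "w (i, \<tau>) = 0"
  proof (rule vandermonde_weights_eq_0[of "H \<times> G \<union> J \<times> {\<tau>0}" "\<lambda>(j, \<tau>). node_point j \<tau>" "n - k"])
    show "finite (H \<times> G \<union> J \<times> {\<tau>0})" using fin by simp
    show "(i, \<tau>) \<in> H \<times> G \<union> J \<times> {\<tau>0}" using assms(11,12) by simp
    show "inj_on (\<lambda>(j, \<tau>). node_point j \<tau>) (H \<times> G \<union> J \<times> {\<tau>0})"
      by (rule inj_on_node_point_group[OF H HJ(2) inj])
    have "card (H \<times> G \<union> J \<times> {\<tau>0}) \<le> card (H \<times> G) + card (J \<times> {\<tau>0})"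
      by (rule card_Un_le)
    also have "\<dots> \<le> card H * si + card J"
      using G(3) by (simp add: card_cartesian_product)
    finally show "card (H \<times> G \<union> J \<times> {\<tau>0}) \<le> n - k" using budget by (simp add: J_def)
    fix t assume "t < n - k"
    have "(\<Sum>p\<in>H \<times> G \<union> J \<times> {\<tau>0}. w p * (case p of (j, \<tau>) \<Rightarrow> node_point j \<tau>) ^ t)
        = (\<Sum>p\<in>H \<times> G. w p * (case p of (j, \<tau>) \<Rightarrow> node_point j \<tau>) ^ t)
          + (\<Sum>p\<in>J \<times> {\<tau>0}. w p * (case p of (j, \<tau>) \<Rightarrow> node_point j \<tau>) ^ t)"
      by (rule sum.union_disjoint) (use fin HJ in auto)
    also have "(\<Sum>p\<in>H \<times> G. w p * (case p of (j, \<tau>) \<Rightarrow> node_point j \<tau>) ^ t)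
        = (\<Sum>(j, \<tau>)\<in>H \<times> G. e j \<tau> * node_point j \<tau> ^ t)"
      by (rule sum.cong) (auto simp: w_def)
    also have "J \<times> {\<tau>0} = (\<lambda>j. (j, \<tau>0)) ` J" by auto
    hence "(\<Sum>p\<in>J \<times> {\<tau>0}. w p * (case p of (j, \<tau>) \<Rightarrow> node_point j \<tau>) ^ t)
        = (\<Sum>j\<in>J. (\<Sum>\<tau>\<in>G. e j \<tau>) * node_point j \<tau>0 ^ t)"
      using HJ by (auto simp: sum.reindex inj_on_def w_def intro!: sum.cong)
    also have "(\<Sum>(j, \<tau>)\<in>H \<times> G. e j \<tau> * node_point j \<tau> ^ t) + \<dots> = 0"
      using group_parity_sum[OF e H R G(1) const sent \<open>t < n - k\<close>] by (simp add: J_def)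
    finally show "(\<Sum>p\<in>H \<times> G \<union> J \<times> {\<tau>0}. w p * (case p of (j, \<tau>) \<Rightarrow> node_point j \<tau>) ^ t) = 0" .
  qed
  thus ?thesis using \<open>i \<in> H\<close> by (simp add: w_def)
qed

lemma repair_by_grouping:
  assumes H: "H \<subseteq> {1..n}" and R: "R \<subseteq> {1..n} - H"
    and budget: "card H * si + card ({1..n} - H - R) \<le> n - k"
    and grp_range: "\<And>\<tau>. \<tau> < ell \<Longrightarrow> grp \<tau> < \<beta>"
    and grp_card: "\<And>\<tau>0. \<tau>0 < ell \<Longrightarrow> card {\<tau>. \<tau> < ell \<and> grp \<tau> = grp \<tau>0} \<le> si"
    and grp_const: "\<And>\<tau>0 \<tau> j. \<tau>0 < ell \<Longrightarrow> \<tau> < ell \<Longrightarrow> grp \<tau> = grp \<tau>0 \<Longrightarrow>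
           j \<in> {1..n} - H \<Longrightarrow> row_digit sm n \<tau> j = row_digit sm n \<tau>0 j"
    and grp_inj: "\<And>\<tau>0 i. \<tau>0 < ell \<Longrightarrow> i \<in> H \<Longrightarrow>
           inj_on (\<lambda>\<tau>. row_digit sm n \<tau> i) {\<tau>. \<tau> < ell \<and> grp \<tau> = grp \<tau>0}"
  shows "\<exists>f :: nat \<Rightarrow> (nat \<Rightarrow> 'a) \<Rightarrow> nat \<Rightarrow> 'a. \<forall>c\<in>code. \<forall>c'\<in>code.
           (\<forall>j\<in>R. \<forall>u < \<beta>. f j (c j) u = f j (c' j) u) \<longrightarrow> (\<forall>i\<in>H. c i = c' i)"
proof (rule exI[of _ "\<lambda>j x u. \<Sum>\<tau> | \<tau> < ell \<and> grp \<tau> = u. x \<tau>"], intro ballI impI ext)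
  fix c c' i \<tau> assume c: "c \<in> code" "c' \<in> code" and "i \<in> H"
    and agree: "\<forall>j\<in>R. \<forall>u < \<beta>. (\<Sum>\<tau> | \<tau> < ell \<and> grp \<tau> = u. c j \<tau>) = (\<Sum>\<tau> | \<tau> < ell \<and> grp \<tau> = u. c' j \<tau>)"
  show "c i \<tau> = c' i \<tau>"
  proof (cases "\<tau> < ell")
    case True
    let ?G = "{\<tau>'. \<tau>' < ell \<and> grp \<tau>' = grp \<tau>}"
    have "(c - c') i \<tau> = 0"
    proof (rule repair_group[of "c - c'" H R si ?G \<tau>])
      show "c - c' \<in> code" using cw.subspace_diff[OF code2_subspace c] .
      show "card ?G \<le> si" by (rule grp_card[OF True])
      show "row_digit sm n \<tau>' j = row_digit sm n \<tau> j" if "\<tau>' \<in> ?G" "j \<in> {1..n} - H" for \<tau>' j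
        using grp_const[OF True _ _ that(2)] that(1) by blast
      show "inj_on (\<lambda>\<tau>'. row_digit sm n \<tau>' i) ?G" if "i \<in> H" for i
        by (rule grp_inj[OF True that])
      show "(\<Sum>\<tau>'\<in>?G. (c - c') j \<tau>') = 0" if "j \<in> R" for j
        using agree that grp_range[OF True] by (simp add: sum_subtractf)
    qed (use H R budget True \<open>i \<in> H\<close> in auto)
    thus ?thesis by simp
  qed (use code2_zero[OF c(1), of i \<tau>] code2_zero[OF c(2), of i \<tau>] in simp)
qed

lemma code2_optimal_repair:
  assumes hh: "1 \<le> hh" "hh + dd \<le> n" "k \<le> dd"
    and si: "si * hh = dd - k + hh" "si \<le> sm" "si dvd s * sm"
  shows "optimal_repair n k ell hh dd code"
  unfolding optimal_repair_def
proof (intro allI impI)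
  fix H R assume "H \<subseteq> {1..n} \<and> card H = hh \<and> R \<subseteq> {1..n} - H \<and> card R = dd"
  hence H: "H \<subseteq> {1..n}" "card H = hh" and R: "R \<subseteq> {1..n} - H" "card R = dd" by auto
  obtain i0 where "i0 \<in> H" using H(2) hh(1) by fastforce
  moreover have "0 < si" using si(1) hh(1) by (cases si) auto
  ultimately interpret repair_rows sm n s si H i0
    using si H by unfold_locales auto
  have "card (H \<union> R) = hh + dd"
    using H R finite_subset[OF H(1)] finite_subset[OF R(1)] by (subst card_Un_disjoint) auto
  moreover have "H \<union> R \<subseteq> {1..n}" using H R by auto
  hence "card ({1..n} - (H \<union> R)) = n - card (H \<union> R)"
    using card_Diff_subset[of "H \<union> R" "{1..n}"] finite_subset by fastforce
  moreover have "{1..n} - H - R = {1..n} - (H \<union> R)" by auto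
  ultimately have budget: "card H * si + card ({1..n} - H - R) \<le> n - k"
    using H(2) si(1) hh by (simp add: mult.commute)
  have beta: "hh * ell div (dd - k + hh) = ell div si"
    using hh(1) by (simp add: si(1)[symmetric] mult.commute[of si])
  obtain grp where "\<And>\<tau>. \<tau> < ell \<Longrightarrow> grp \<tau> < ell div si"
    and "\<And>\<tau>0. \<tau>0 < ell \<Longrightarrow> card {\<tau>. \<tau> < ell \<and> grp \<tau> = grp \<tau>0} \<le> si"
    and "\<And>\<tau>0 \<tau> j. \<tau>0 < ell \<Longrightarrow> \<tau> < ell \<Longrightarrow> grp \<tau> = grp \<tau>0 \<Longrightarrow>
           j \<in> {1..n} - H \<Longrightarrow> row_digit sm n \<tau> j = row_digit sm n \<tau>0 j"
    and "\<And>\<tau>0 i. \<tau>0 < ell \<Longrightarrow> i \<in> H \<Longrightarrow>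
           inj_on (\<lambda>\<tau>. row_digit sm n \<tau> i) {\<tau>. \<tau> < ell \<and> grp \<tau> = grp \<tau>0}"
    using exists_repair_grouping by blast
  from repair_by_grouping[OF H(1) R(1) budget this]
  show "\<exists>f :: nat \<Rightarrow> (nat \<Rightarrow> 'a) \<Rightarrow> nat \<Rightarrow> 'a. \<forall>c\<in>code. \<forall>c'\<in>code.
      (\<forall>j\<in>R. \<forall>u < hh * ell div (dd - k + hh). f j (c j) u = f j (c' j) u) \<longrightarrow> (\<forall>i\<in>H. c i = c' i)"
    unfolding beta .
qed

end

theorem theorem2:
  fixes n k m :: nat
    and h d :: "nat \<Rightarrow> nat"
    and lam :: "nat \<Rightarrow> nat \<Rightarrow> 'a::{field,finite}"
  assumes "1 \<le> k" and "k < n" and "1 \<le> m"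
    and "\<forall>i\<in>{1..m}. 1 \<le> h i \<and> h i \<le> n - k"
    and "\<forall>i\<in>{1..m}. k \<le> d i \<and> d i \<le> n - h i"
    and "\<forall>i\<in>{1..m}. h i dvd (d i - k)"
    and "\<forall>i\<in>{1..m}. \<forall>j\<in>{1..m}. i \<le> j \<longrightarrow>
           (d i - k + h i) div h i \<le> (d j - k + h j) div h j"
    and "card (UNIV :: 'a set) \<ge> ((d m - k + h m) div h m) * n"
    and "inj_on (\<lambda>(i, j). lam i j) ({1..n} \<times> {0..<(d m - k + h m) div h m})"
  shows "let sv = (\<lambda>i. (d i - k + h i) div h i);
             s = Lcm (sv ` {1..<m});
             ell = s * sv m ^ n;
             C = code2 n (n - k) (sv m) s lam
         in is_MDS_array_code n k ell C \<and>
            (\<forall>i\<in>{1..m}. optimal_repair n k ell (h i) (d i) C)"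
proof -
  define sv where "sv = (\<lambda>i. (d i - k + h i) div h i)"
  define s where "s = Lcm (sv ` {1..<m})"
  have sv_h: "sv i * h i = d i - k + h i" if "i \<in> {1..m}" for i
  proof -
    have "h i dvd d i - k + h i" using assms(6) that by simp
    thus ?thesis unfolding sv_def by (rule dvd_div_mult_self)
  qed
  have "1 \<le> h m" using assms(3,4) by simp
  hence sv_pos: "0 < sv m" using sv_h[of m] assms(3) by (cases "sv m") auto
  interpret code2_setting n k "sv m" s lam
    using sv_pos assms(2,9) by unfold_locales (simp_all add: sv_def)
  have "optimal_repair n k ell (h i) (d i) code" if i: "i \<in> {1..m}" for i
  proof (rule code2_optimal_repair)
    show "1 \<le> h i" "k \<le> d i" using assms(4,5) i by auto
    have "h i \<le> n - k" "d i \<le> n - h i" using assms(4,5) i by auto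
    thus "h i + d i \<le> n" by arith
    show "sv i * h i = d i - k + h i" by (rule sv_h[OF i])
    show "sv i \<le> sv m" using assms(3,7) i by (simp add: sv_def)
    show "sv i dvd s * sv m"
      using i by (cases "i = m") (simp_all add: s_def dvd_Lcm)
  qed
  thus ?thesis using code2_is_MDS by (simp add: Let_def sv_def s_def)
qed

end
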